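(* Fix $p\ge1$, $\beta\in\mathbb R^p$, $\sigma^2>0$, $M\subseteq\{1,\dots,p\}$ with $|M|=m$, and $\alpha_0\in(0,1)$. Let $(X_n)$ be a fixed sequence of design matrices with $n$ rows and $p$ columns with $\frac1nX_n^\top X_n\to Q$ for some positive definite $Q$, and let $Y_n=X_n\beta+\epsilon_n$ with $\epsilon_n\sim\mathcal N(0,\sigma^2I)$. Let $W\sim\chi^2_m$, $Z_n\sim\chi^2_{n-p-1}$, $c_n=\frac{p}{n-p-1}F^{-1}_{p,n-p-1}(1-\alpha_0)$, and $d(Y_n)=-Y_n^\top P_{(X_n)_{-M}}Y_n$, with $W$, $Z_n$ and $d(Y_n)$ independent. Then there exist $\delta>0$ and $N>0$ such that $\Pr(W-c_nZ_n\ge d(Y_n)/\sigma^2)\ge\delta$ for all $n>N$.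
   Context: $P_A:=A(A^\top A)^{-1}A^\top$; $A_{-M}$ is $A$ with the columns indexed by $M$ removed; $F_{a,b}$ is the CDF of the $F_{a,b}$ distribution. *)

theory Defs
  imports "HOL-Probability.Probability" "Jordan_Normal_Form.Gauss_Jordan_Elimination"
begin

definition chi_sq_density :: "nat \<Rightarrow> real \<Rightarrow> real" where
  "chi_sq_density k x = (if x > 0 then
     x powr (real k / 2 - 1) * exp (- x / 2) / (2 powr (real k / 2) * Gamma (real k / 2))
   else 0)"

definition chi_sq_measure :: "nat \<Rightarrow> real measure" where
  "chi_sq_measure k = (if k = 0 then return borel 0 else density lborel (chi_sq_density k))"

definition F_density :: "nat \<Rightarrow> nat \<Rightarrow> real \<Rightarrow> real" where
  "F_density a b x = (if x > 0 then
     Gamma ((real a + real b) / 2) / (Gamma (real a / 2) * Gamma (real b / 2))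
     * (real a / real b) powr (real a / 2) * x powr (real a / 2 - 1)
     * (1 + real a * x / real b) powr (- (real a + real b) / 2)
   else 0)"

definition F_cdf :: "nat \<Rightarrow> nat \<Rightarrow> real \<Rightarrow> real" where
  "F_cdf a b = cdf (density lborel (F_density a b))"

definition F_quantile :: "nat \<Rightarrow> nat \<Rightarrow> real \<Rightarrow> real" where
  "F_quantile a b q = Inf {x. q \<le> F_cdf a b x}"

definition proj_mat :: "real mat \<Rightarrow> real mat" where
  "proj_mat A = A * the (mat_inverse (A\<^sup>T * A)) * A\<^sup>T"

text \<open>A with the columns indexed by M removed (columns indexed 0..dim_col A - 1,
  remaining columns kept in their original order).\<close>
definition drop_cols :: "real mat \<Rightarrow> nat set \<Rightarrow> real mat" where
  "drop_cols A M = mat_of_cols (dim_row A) (map (col A) (filter (\<lambda>j. j \<notin> M) [0..<dim_col A]))"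

definition pos_def_mat :: "real mat \<Rightarrow> bool" where
  "pos_def_mat Q \<longleftrightarrow> Q\<^sup>T = Q \<and>
     (\<forall>x \<in> carrier_vec (dim_row Q). x \<noteq> 0\<^sub>v (dim_row Q) \<longrightarrow> x \<bullet> (Q *\<^sub>v x) > 0)"

end

theory Submission
  imports Defs "Jordan_Normal_Form.Determinant" "HOL-Real_Asymp.Real_Asymp"
begin

text \<open>The event contains \<open>{W \<ge> a} \<inter> {Z\<^sub>n \<le> 2(n - p - 1)} \<inter> {d(Y\<^sub>n) \<le> -b\<sigma>\<^sup>2}\<close> whenever
  \<open>a + b\<close> bounds \<open>c\<^sub>n Z\<^sub>n\<close> on the middle event, and by independence its probability is at least
  the product of the three. Such a bound exists because \<open>c\<^sub>n (n - p - 1)\<close>, which is \<open>p\<close> times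
  the \<open>(1 - \<alpha>\<^sub>0)\<close>-quantile of \<open>F\<^sub>p\<^sub>,\<^sub>n\<^sub>-\<^sub>p\<^sub>-\<^sub>1\<close>, stays bounded: as the \<open>F\<^sub>p\<^sub>,\<^sub>b\<close> densities tend
  to that of \<open>\<chi>\<^sup>2\<^sub>p / p\<close>, Fatou's lemma shows that for large \<open>b\<close> they put mass at least
  \<open>1 - \<alpha>\<^sub>0\<close> below a fixed point. The middle event has probability at least \<open>1/2\<close> by
  Markov's inequality.

  If \<open>m \<ge> 1\<close>, take \<open>b = 0\<close>: \<open>W\<close> has unbounded support, and \<open>d(Y\<^sub>n) \<le> 0\<close> as soon as the
  Gram matrix of the kept columns is invertible, which happens eventually because \<open>X\<^sub>n\<^sup>T X\<^sub>n / n\<close> tends to the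
  positive definite \<open>Q\<close>. If \<open>m = 0\<close> then \<open>W = 0\<close> and \<open>a = 0\<close>: for a kept column \<open>w\<close>,
  \<open>-d(Y\<^sub>n) = Y\<^sub>n\<^sup>T P Y\<^sub>n \<ge> (w \<bullet> Y\<^sub>n)\<^sup>2 / \<parallel>w\<parallel>\<^sup>2\<close> by Cauchy-Schwarz, and \<open>w \<bullet> Y\<^sub>n / \<parallel>w\<parallel>\<close>
  is normal with variance \<open>\<sigma>\<^sup>2\<close>, so it exceeds any fixed bound with a probability bounded away from \<open>0\<close>.\<close>

section \<open>Gamma integrals and the chi-squared distribution\<close>

lemma Gamma_add_ge_powr:
  fixes z h :: real
  assumes z: "z > 1" and h: "h > 0"
  shows "Gamma z * (z - 1) powr h \<le> Gamma (z + h)"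
proof -
  define y where "y = z - 1"
  define H where "H = h + 1"
  have y: "y > 0" and H: "H > 1" using z h by (auto simp: y_def H_def)
  have Gamma_y1: "Gamma (y + 1) = y * Gamma y"
    using y by (intro Gamma_plus1) (auto elim!: nonpos_Ints_cases)
  have pos: "Gamma y > 0" "Gamma (y + H) > 0" using y H by auto
  \<comment> \<open>log-convexity of \<open>Gamma\<close> at \<open>y + 1\<close>, a convex combination of \<open>y\<close> and \<open>y + H\<close>\<close>
  have "(ln \<circ> Gamma) ((1 - 1/H) *\<^sub>R y + (1/H) *\<^sub>R (y + H))
      \<le> (1 - 1/H) * (ln \<circ> Gamma) y + (1/H) * (ln \<circ> Gamma) (y + H)"
    by (rule convex_onD[OF log_convex_Gamma_real]) (use y H in auto)
  moreover have "(1 - 1/H) *\<^sub>R y + (1/H) *\<^sub>R (y + H) = y + 1" using H by (simp add: field_simps)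
  ultimately have "ln y + ln (Gamma y) \<le> (1 - 1/H) * ln (Gamma y) + (1/H) * ln (Gamma (y + H))"
    using Gamma_y1 y pos by (simp add: ln_mult less_imp_neq[symmetric])
  hence "H * ln y + ln (Gamma y) \<le> ln (Gamma (y + H))"
    using H by (simp add: field_simps)
  hence "y powr H * Gamma y \<le> Gamma (y + H)"
    using y pos by (metis exp_le_cancel_iff exp_ln exp_add powr_def mult.commute less_irrefl)
  moreover have "y powr H * Gamma y = Gamma z * (z - 1) powr h"
    using y Gamma_y1 by (simp add: H_def y_def powr_add ac_simps)
  moreover have "y + H = z + h" by (simp add: y_def H_def)
  ultimately show ?thesis by simp
qed

lemma nn_integral_Gamma_kernel:
  fixes s l :: real
  assumes s: "s > 0" and l: "l > 0"
  shows "(\<integral>\<^sup>+x. ennreal (indicator {0<..} x * x powr (s - 1) * exp (- (l * x))) \<partial>lborel)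
         = ennreal (Gamma s / l powr s)"
proof -
  define f where "f = (\<lambda>t::real. ennreal (indicator {0..} t * t powr (s - 1) / exp t))"
  let ?I = "\<integral>\<^sup>+x. ennreal (indicator {0<..} x * x powr (s - 1) * exp (- (l * x))) \<partial>lborel"
  have [measurable]: "f \<in> borel_measurable borel" unfolding f_def by measurable
  have f_scaled: "f (0 + l * x) = ennreal (l powr (s - 1)) *
      ennreal (indicator {0<..} x * x powr (s - 1) * exp (- (l * x)))" for x
    using l by (cases "x > 0")
      (auto simp: f_def powr_mult exp_minus field_simps ennreal_mult'[symmetric] indicator_def
        zero_le_mult_iff)
  have "ennreal (Gamma s) = (\<integral>\<^sup>+x. f x \<partial>lborel)"
    using Gamma_conv_nn_integral_real[OF s] by (simp add: f_def)
  also have "\<dots> = ennreal l * (\<integral>\<^sup>+x. f (0 + l * x) \<partial>lborel)"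
    using nn_integral_real_affine[of f l 0] l by simp
  also have "\<dots> = ennreal l * (ennreal (l powr (s - 1)) * ?I)"
    unfolding f_scaled by (subst nn_integral_cmult) auto
  also have "\<dots> = ennreal (l * l powr (s - 1)) * ?I"
    using l by (simp add: ennreal_mult mult.assoc)
  also have "l * l powr (s - 1) = l powr s"
    using l by (simp add: powr_diff)
  finally have Gamma_eq: "ennreal (Gamma s) = ennreal (l powr s) * ?I" .
  have pos: "l powr s > 0" using l by simp
  have "ennreal (Gamma s / l powr s) = ennreal (Gamma s) / ennreal (l powr s)"
    using pos s by (simp add: divide_ennreal)
  also have "\<dots> = ?I"
    unfolding Gamma_eq by (subst mult.commute, rule ennreal_mult_divide_eq) (use pos in auto)
  finally show ?thesis by simp
qed

lemma measure_density_atLeast_pos: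
  fixes f :: "real \<Rightarrow> real"
  assumes [measurable]: "f \<in> borel_measurable borel"
    and pos: "\<And>x. x > s \<Longrightarrow> f x > 0"
    and "finite_measure (density lborel f)"
  shows "0 < measure (density lborel f) {t..}"
proof -
  interpret finite_measure "density lborel f" by fact
  define u where "u = max s t"
  have "\<not> (AE x in lborel. ennreal (f x) * indicator {t..} x = 0)"
  proof
    assume "AE x in lborel. ennreal (f x) * indicator {t..} x = 0"
    then have "AE x in lborel. x \<notin> {u<..<u + 1}"
    proof eventually_elim
      case (elim x)
      then show ?case using pos[of x] by (auto simp: u_def indicator_def)
    qed
    then have "{u<..<u + 1} \<in> null_sets lborel" by (subst AE_iff_null_sets) auto
    then show False by (simp add: null_sets_def)
  qed
  then have "0 < (\<integral>\<^sup>+x. ennreal (f x) * indicator {t..} x \<partial>lborel)"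
    by (simp add: nn_integral_0_iff_AE zero_less_iff_neq_zero)
  then show ?thesis
    by (simp add: emeasure_density[symmetric] emeasure_eq_measure)
qed

lemma chi_sq_density_nonneg: "chi_sq_density k x \<ge> 0"
  by (cases "k = 0") (auto simp: chi_sq_density_def intro!: divide_nonneg_nonneg)

lemma chi_sq_density_measurable [measurable]: "chi_sq_density k \<in> borel_measurable borel"
  unfolding chi_sq_density_def by measurable

lemma nn_integral_chi_sq_density_moment:
  assumes k: "k \<ge> 1" and j: "j \<ge> 0"
  shows "(\<integral>\<^sup>+x. ennreal (chi_sq_density k x * x powr j) \<partial>lborel)
    = ennreal (2 powr j * Gamma (real k / 2 + j) / Gamma (real k / 2))"
proof -
  define c where "c = 2 powr (real k / 2) * Gamma (real k / 2)"
  have c: "c > 0" unfolding c_def using k by auto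
  have integrand: "ennreal (chi_sq_density k x * x powr j) = ennreal (1 / c) *
     ennreal (indicator {0<..} x * x powr ((real k / 2 + j) - 1) * exp (- ((1/2) * x)))" for x
    using c by (cases "x > 0")
      (auto simp: chi_sq_density_def ennreal_mult'[symmetric] c_def powr_add[symmetric] diff_add_eq)
  have "(\<integral>\<^sup>+x. ennreal (chi_sq_density k x * x powr j) \<partial>lborel) = ennreal (1 / c) *
     (\<integral>\<^sup>+x. ennreal (indicator {0<..} x * x powr ((real k / 2 + j) - 1) * exp (- ((1/2) * x))) \<partial>lborel)"
    unfolding integrand by (rule nn_integral_cmult) measurable
  also have "\<dots> = ennreal (1 / c) * ennreal (Gamma (real k / 2 + j) / (1/2) powr (real k / 2 + j))"
    using k j by (subst nn_integral_Gamma_kernel) auto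
  also have "\<dots> = ennreal (1 / c * (Gamma (real k / 2 + j) / (1/2) powr (real k / 2 + j)))"
    using c by (simp add: ennreal_mult'[symmetric])
  also have "1 / c * (Gamma (real k / 2 + j) / (1/2) powr (real k / 2 + j))
      = 2 powr j * Gamma (real k / 2 + j) / Gamma (real k / 2)"
    unfolding powr_add by (simp add: c_def powr_divide field_simps)
  finally show ?thesis .
qed

lemma prob_space_chi_sq_measure: "prob_space (chi_sq_measure k)"
proof (cases "k = 0")
  case False
  have "(\<integral>\<^sup>+x. ennreal (chi_sq_density k x) \<partial>lborel)
      = (\<integral>\<^sup>+x. ennreal (chi_sq_density k x * x powr 0) \<partial>lborel)"
    by (intro nn_integral_cong) (simp add: chi_sq_density_def)
  also have "\<dots> = 1"
    using nn_integral_chi_sq_density_moment[of k 0] Gamma_real_pos[of "real k / 2"] False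
    by (simp add: less_imp_neq[symmetric])
  finally have "(\<integral>\<^sup>+x. ennreal (chi_sq_density k x) \<partial>lborel) = 1" .
  then show ?thesis
    using False by (intro prob_spaceI) (simp add: chi_sq_measure_def emeasure_density)
qed (simp add: chi_sq_measure_def prob_space_return)

lemma nn_integral_chi_sq_density_mean:
  assumes k: "k \<ge> 1"
  shows "(\<integral>\<^sup>+x. ennreal (chi_sq_density k x * x) \<partial>lborel) = ennreal (real k)"
proof -
  have "(\<integral>\<^sup>+x. ennreal (chi_sq_density k x * x) \<partial>lborel)
      = (\<integral>\<^sup>+x. ennreal (chi_sq_density k x * x powr 1) \<partial>lborel)"
    by (intro nn_integral_cong) (simp add: chi_sq_density_def)
  also have "\<dots> = ennreal (2 powr 1 * Gamma (real k / 2 + 1) / Gamma (real k / 2))"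
    using k by (intro nn_integral_chi_sq_density_moment) auto
  also have "Gamma (real k / 2 + 1) = real k / 2 * Gamma (real k / 2)"
    using k by (intro Gamma_plus1) (auto elim!: nonpos_Ints_cases)
  finally show ?thesis
    using Gamma_real_pos[of "real k / 2"] k by (simp add: less_imp_neq[symmetric])
qed

lemma chi_sq_measure_atLeastAtMost_ge_half:
  assumes k: "k \<ge> 1"
  shows "1/2 \<le> measure (chi_sq_measure k) {0..2 * real k}"
proof -
  interpret prob_space "chi_sq_measure k" by (rule prob_space_chi_sq_measure)
  have M: "chi_sq_measure k = density lborel (chi_sq_density k)"
    using k by (simp add: chi_sq_measure_def)
  let ?O = "UNIV - {0..2 * real k}"
  \<comment> \<open>Markov's inequality: the density vanishes below \<open>0\<close>, and \<open>x / (2 k) > 1\<close> above \<open>2 k\<close>\<close>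
  have "emeasure (chi_sq_measure k) ?O = (\<integral>\<^sup>+x. ennreal (chi_sq_density k x) * indicator ?O x \<partial>lborel)"
    unfolding M by (rule emeasure_density) auto
  also have "\<dots> \<le> (\<integral>\<^sup>+x. ennreal (1 / (2 * real k)) * ennreal (chi_sq_density k x * x) \<partial>lborel)"
  proof (rule nn_integral_mono)
    fix x :: real
    show "ennreal (chi_sq_density k x) * indicator ?O x
        \<le> ennreal (1 / (2 * real k)) * ennreal (chi_sq_density k x * x)"
    proof (cases "x > 2 * real k")
      case True
      then have "chi_sq_density k x * 1 \<le> chi_sq_density k x * (x / (2 * real k))"
        using k chi_sq_density_nonneg[of k x] by (intro mult_left_mono) auto
      then show ?thesis
        using True k chi_sq_density_nonneg[of k x]
        by (simp add: ennreal_mult'[symmetric] ennreal_leI field_simps)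
    qed (auto simp: chi_sq_density_def indicator_def)
  qed
  also have "\<dots> = ennreal (1 / (2 * real k)) * ennreal (real k)"
    using k by (simp add: nn_integral_cmult nn_integral_chi_sq_density_mean)
  also have "\<dots> = ennreal (1/2)" using k by (simp add: ennreal_mult'[symmetric])
  finally have "measure (chi_sq_measure k) ?O \<le> 1/2"
    unfolding measure_def by (intro enn2real_leI) auto
  then show ?thesis using prob_compl[of ?O] by (simp add: M Diff_Diff_Int)
qed

lemma chi_sq_measure_atLeast_pos:
  assumes "k \<ge> 1"
  shows "0 < measure (chi_sq_measure k) {t..}"
proof -
  have M: "chi_sq_measure k = density lborel (chi_sq_density k)"
    using assms by (simp add: chi_sq_measure_def)
  have "finite_measure (chi_sq_measure k)"
    using prob_space_chi_sq_measure by (rule prob_space.axioms(1))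
  then show ?thesis
    unfolding M using assms
    by (intro measure_density_atLeast_pos[of _ 0]) (auto simp: chi_sq_density_def)
qed

section \<open>Bounded quantiles of the F distribution\<close>

lemma Gamma_half_nonneg: "0 \<le> Gamma (real k / 2)"
  by (cases "k = 0") auto

lemma F_density_nonneg: "0 \<le> F_density a b x"
  using Gamma_half_nonneg[of "a + b"] Gamma_half_nonneg[of a] Gamma_half_nonneg[of b]
  unfolding F_density_def by (auto intro!: mult_nonneg_nonneg divide_nonneg_nonneg)

lemma F_density_measurable [measurable]: "F_density a b \<in> borel_measurable borel"
  unfolding F_density_def by measurable

text \<open>\<open>scaled_chi_sq_density a\<close> is the density of \<open>\<chi>\<^sup>2\<^sub>a / a\<close>, the pointwise limit of
  \<open>F_density a b\<close> as \<open>b \<rightarrow> \<infinity>\<close>. The minorant replaces \<open>\<Gamma>((a + b)/2) / \<Gamma>(b/2)\<close> in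
  \<open>F_density a b\<close> by its lower bound \<open>(b/2 - 1)\<^bsup>a/2\<^esup>\<close> from \<open>Gamma_add_ge_powr\<close>.\<close>

definition scaled_chi_sq_density :: "nat \<Rightarrow> real \<Rightarrow> real" where
  "scaled_chi_sq_density a x = ((real a / 2) powr (real a / 2) / Gamma (real a / 2)) *
     (indicator {0<..} x * x powr (real a / 2 - 1) * exp (- ((real a / 2) * x)))"

definition F_density_minorant :: "nat \<Rightarrow> nat \<Rightarrow> real \<Rightarrow> real" where
  "F_density_minorant a b x = indicator {0<..} x * (x powr (real a / 2 - 1) *
     (1 + real a * x / real b) powr (- (real a + real b) / 2) *
     ((real a / 2) powr (real a / 2) / Gamma (real a / 2)) *
     ((real b / 2 - 1) / (real b / 2)) powr (real a / 2))"

lemma scaled_chi_sq_density_measurable [measurable]: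
  "scaled_chi_sq_density a \<in> borel_measurable borel"
  unfolding scaled_chi_sq_density_def by measurable

lemma F_density_minorant_measurable [measurable]:
  "F_density_minorant a b \<in> borel_measurable borel"
  unfolding F_density_minorant_def by measurable

lemma F_density_minorant_le:
  assumes a: "a \<ge> 1" and b: "b > 2"
  shows "F_density_minorant a b x \<le> F_density a b x"
proof (cases "x > 0")
  case True
  define z where "z = real b / 2"
  define h where "h = real a / 2"
  define X where "X = x powr (h - 1) * (1 + real a * x / real b) powr (- (real a + real b) / 2)"
  have z: "z > 1" and h: "h > 0" using a b by (auto simp: z_def h_def)
  have pos: "Gamma z > 0" "Gamma h > 0" "z powr h > 0" using z h by auto
  have "h powr h / Gamma h * ((z - 1) / z) powr h
      = Gamma z * (z - 1) powr h / (Gamma h * Gamma z) * (h / z) powr h"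
    using pos z h by (simp add: powr_divide field_simps less_imp_neq[symmetric])
  also have "\<dots> \<le> Gamma (z + h) / (Gamma h * Gamma z) * (h / z) powr h"
    using Gamma_add_ge_powr[OF z h] pos by (intro mult_right_mono divide_right_mono) auto
  finally have "X * (h powr h / Gamma h * ((z - 1) / z) powr h)
      \<le> X * (Gamma (z + h) / (Gamma h * Gamma z) * (h / z) powr h)"
    by (intro mult_left_mono) (auto simp: X_def)
  moreover have "h / z = real a / real b" by (simp add: h_def z_def)
  ultimately show ?thesis
    using True by (simp add: F_density_minorant_def F_density_def X_def z_def h_def
        add_divide_distrib ac_simps)
qed (simp add: F_density_minorant_def F_density_nonneg)

lemma F_density_minorant_tendsto:
  assumes a: "a \<ge> 1"
  shows "(\<lambda>b. F_density_minorant a b x) \<longlonglongrightarrow> scaled_chi_sq_density a x"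
proof (cases "x > 0")
  case True
  define c where "c = real a * x"
  have c: "c > 0" and ha: "real a / 2 > 0" using a True by (auto simp: c_def)
  have "(\<lambda>b::nat. (1 + c / real b) powr (-(real a + real b)/2)) \<longlonglongrightarrow> exp (-c/2)"
    using c ha by real_asymp
  moreover have "(\<lambda>b::nat. ((real b / 2 - 1) / (real b / 2)) powr (real a / 2)) \<longlonglongrightarrow> 1"
    using ha by real_asymp
  ultimately have "(\<lambda>b. x powr (real a / 2 - 1) * (1 + c / real b) powr (-(real a + real b)/2) *
       ((real a / 2) powr (real a / 2) / Gamma (real a / 2)) *
       ((real b / 2 - 1) / (real b / 2)) powr (real a / 2))
     \<longlonglongrightarrow> x powr (real a / 2 - 1) * exp (-c/2) *
       ((real a / 2) powr (real a / 2) / Gamma (real a / 2)) * 1"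
    by (intro tendsto_intros)
  then show ?thesis
    using True by (simp add: F_density_minorant_def scaled_chi_sq_density_def c_def mult_ac)
qed (simp add: F_density_minorant_def scaled_chi_sq_density_def)

lemma nn_integral_scaled_chi_sq_density:
  assumes a: "a \<ge> 1"
  shows "(\<integral>\<^sup>+x. ennreal (scaled_chi_sq_density a x) \<partial>lborel) = 1"
proof -
  have ha: "real a / 2 > 0" using a by simp
  have "(\<integral>\<^sup>+x. ennreal (scaled_chi_sq_density a x) \<partial>lborel)
      = ennreal ((real a / 2) powr (real a / 2) / Gamma (real a / 2)) *
        (\<integral>\<^sup>+x. ennreal (indicator {0<..} x * x powr (real a / 2 - 1) * exp (- ((real a / 2) * x))) \<partial>lborel)"
    unfolding scaled_chi_sq_density_def using ha
    by (subst ennreal_mult) (auto intro!: nn_integral_cmult)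
  also have "\<dots> = ennreal ((real a / 2) powr (real a / 2) / Gamma (real a / 2)) *
      ennreal (Gamma (real a / 2) / (real a / 2) powr (real a / 2))"
    using ha by (subst nn_integral_Gamma_kernel) auto
  also have "\<dots> = 1"
    using ha Gamma_real_pos[OF ha] by (simp add: ennreal_mult[symmetric] less_imp_neq[symmetric])
  finally show ?thesis .
qed

lemma F_cdf_eq_nn_integral:
  "F_cdf a b x = enn2real (\<integral>\<^sup>+t. ennreal (F_density a b t) * indicator {..x} t \<partial>lborel)"
  unfolding F_cdf_def cdf_def2 measure_def by (subst emeasure_density) auto

lemma F_cdf_neg: "x < 0 \<Longrightarrow> F_cdf a b x = 0"
  unfolding F_cdf_eq_nn_integral
  by (subst nn_integral_cong[where v = "\<lambda>_. 0"]) (auto simp: F_density_def indicator_def)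

lemma nn_integral_F_density_atMost_finite:
  assumes a: "a \<ge> 1" and C: "C \<ge> 0"
  shows "(\<integral>\<^sup>+t. ennreal (F_density a b t) * indicator {..C} t \<partial>lborel) < \<infinity>"
proof -
  define h where "h = real a / 2"
  define K where "K = Gamma ((real a + real b) / 2) / (Gamma (real a / 2) * Gamma (real b / 2))
    * (real a / real b) powr (real a / 2)"
  have h: "h > 0" using a by (simp add: h_def)
  have K: "K \<ge> 0"
    unfolding K_def using Gamma_half_nonneg[of "a + b"] Gamma_half_nonneg[of a] Gamma_half_nonneg[of b]
    by (auto intro!: mult_nonneg_nonneg divide_nonneg_nonneg)
  have "(\<integral>\<^sup>+t. ennreal (F_density a b t) * indicator {..C} t \<partial>lborel)
      \<le> (\<integral>\<^sup>+t. ennreal K * ennreal (indicator {0..C} t * t powr (h - 1)) \<partial>lborel)"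
  proof (intro nn_integral_mono)
    fix t :: real
    show "ennreal (F_density a b t) * indicator {..C} t \<le> ennreal K * ennreal (indicator {0..C} t * t powr (h - 1))"
    proof (cases "t > 0 \<and> t \<le> C")
      case True
      have base: "1 \<le> 1 + real a * t / real b" using True by simp
      have "(1 + real a * t / real b) powr (- (real a + real b) / 2)
          \<le> (1 + real a * t / real b) powr 0"
        using base by (intro powr_mono) auto
      also have "\<dots> = 1" using base by simp
      finally have "(1 + real a * t / real b) powr (- (real a + real b) / 2) \<le> 1" .
      then have "K * t powr (h - 1) * (1 + real a * t / real b) powr (- (real a + real b) / 2)
          \<le> K * t powr (h - 1) * 1"
        using K by (intro mult_left_mono) auto
      moreover have "F_density a b t
          = K * t powr (h - 1) * (1 + real a * t / real b) powr (- (real a + real b) / 2)"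
        using True by (simp add: F_density_def K_def h_def)
      ultimately show ?thesis using True K by (simp add: ennreal_mult'[symmetric] ennreal_leI)
    qed (auto simp: F_density_def indicator_def)
  qed
  also have "\<dots> = ennreal K * (\<integral>\<^sup>+t. ennreal (indicator {0..C} t * t powr (h - 1)) \<partial>lborel)"
    by (rule nn_integral_cmult) measurable
  also have "(\<integral>\<^sup>+t. ennreal (indicator {0..C} t * t powr (h - 1)) \<partial>lborel)
      = ennreal (C powr (h - 1 + 1) / (h - 1 + 1))"
    by (rule nn_integral_has_integral_lebesgue) (use has_integral_powr_from_0[of "h - 1" C] h C in auto)
  also have "ennreal K * ennreal (C powr (h - 1 + 1) / (h - 1 + 1)) < \<infinity>"
    by (simp add: ennreal_mult_less_top)
  finally show ?thesis .
qed

lemma eventually_F_cdf_ge: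
  assumes a: "a \<ge> 1" and C: "C \<ge> 0" and q: "q \<ge> 0"
    and below: "ennreal q < (\<integral>\<^sup>+x. ennreal (scaled_chi_sq_density a x) * indicator {..C} x \<partial>lborel)"
  shows "\<forall>\<^sub>F b in sequentially. q \<le> F_cdf a b C"
proof -
  define u where "u = (\<lambda>b x. ennreal (F_density_minorant a b x) * indicator {..C} x)"
  have "liminf (\<lambda>b. u b x) = ennreal (scaled_chi_sq_density a x) * indicator {..C} x" for x
  proof (rule lim_imp_Liminf)
    show "(\<lambda>b. u b x) \<longlonglongrightarrow> ennreal (scaled_chi_sq_density a x) * indicator {..C} x"
      unfolding u_def by (cases "x \<le> C") (auto intro!: tendsto_ennrealI F_density_minorant_tendsto[OF a])
  qed simp
  then have "ennreal q < liminf (\<lambda>b. integral\<^sup>N lborel (u b))"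
    using below nn_integral_liminf[of "u" lborel] by (simp add: u_def)
  then have "\<forall>\<^sub>F b in sequentially. ennreal q < integral\<^sup>N lborel (u b)"
    by (rule less_LiminfD)
  then show ?thesis
    using eventually_gt_at_top[of 2]
  proof eventually_elim
    case (elim b)
    have "integral\<^sup>N lborel (u b) \<le> (\<integral>\<^sup>+t. ennreal (F_density a b t) * indicator {..C} t \<partial>lborel)"
      unfolding u_def using elim
      by (intro nn_integral_mono mult_right_mono ennreal_leI F_density_minorant_le[OF a]) auto
    then have "ennreal q \<le> (\<integral>\<^sup>+t. ennreal (F_density a b t) * indicator {..C} t \<partial>lborel)"
      using elim by (meson less_le_trans less_imp_le)
    then show ?case
      using enn2real_mono nn_integral_F_density_atMost_finite[OF a C, of b] q
      unfolding F_cdf_eq_nn_integral by fastforce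
  qed
qed

lemma F_quantile_eventually_bounded:
  assumes a: "a \<ge> 1" and \<alpha>: "0 < \<alpha>" "\<alpha> < 1"
  obtains C where "C \<ge> 0" "\<forall>\<^sub>F b in sequentially. F_quantile a b (1 - \<alpha>) \<le> C"
proof -
  define M where "M = density lborel (scaled_chi_sq_density a)"
  have "(\<lambda>i. emeasure M {..real i}) \<longlonglongrightarrow> emeasure M (\<Union>i. {..real i})"
    by (rule Lim_emeasure_incseq) (auto simp: M_def incseq_def)
  moreover have "(\<Union>i. {..real i}) = UNIV"
    by (auto intro: real_arch_simple)
  moreover have "emeasure M UNIV = 1"
    using nn_integral_scaled_chi_sq_density[OF a] unfolding M_def
    by (subst emeasure_density) auto
  moreover have "ennreal (1 - \<alpha>) < 1" using \<alpha> by (simp add: ennreal_lessI)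
  ultimately have "\<forall>\<^sub>F i in sequentially. ennreal (1 - \<alpha>) < emeasure M {..real i}"
    by (intro order_tendstoD(1)) auto
  then obtain i where "ennreal (1 - \<alpha>) < emeasure M {..real i}"
    by (auto simp: eventually_sequentially)
  then have "ennreal (1 - \<alpha>) <
      (\<integral>\<^sup>+x. ennreal (scaled_chi_sq_density a x) * indicator {..real i} x \<partial>lborel)"
    by (simp add: M_def emeasure_density)
  then have "\<forall>\<^sub>F b in sequentially. 1 - \<alpha> \<le> F_cdf a b (real i)"
    using \<alpha> by (intro eventually_F_cdf_ge[OF a]) auto
  then have "\<forall>\<^sub>F b in sequentially. F_quantile a b (1 - \<alpha>) \<le> real i"
  proof eventually_elim
    case (elim b)
    have "bdd_below {x. 1 - \<alpha> \<le> F_cdf a b x}"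
      using F_cdf_neg[of _ a b] \<alpha> by (intro bdd_belowI[of _ 0]) (force simp: not_le[symmetric])
    then show ?case
      unfolding F_quantile_def using elim by (intro cInf_lower) auto
  qed
  then show ?thesis using that[of "real i"] by simp
qed

lemma F_critical_value_bounded:
  assumes p: "p \<ge> 1" and \<alpha>: "0 < \<alpha>" "\<alpha> < 1"
  obtains K where "\<forall>\<^sub>F n in sequentially. \<forall>z. 0 \<le> z \<longrightarrow> z \<le> 2 * real (n - p - 1) \<longrightarrow>
    real p / (real n - real p - 1) * F_quantile p (n - p - 1) (1 - \<alpha>) * z \<le> K"
proof -
  obtain C where C: "C \<ge> 0" and ev: "\<forall>\<^sub>F b in sequentially. F_quantile p b (1 - \<alpha>) \<le> C"
    using F_quantile_eventually_bounded[OF p \<alpha>] .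
  have "\<forall>\<^sub>F n in sequentially. F_quantile p (n - (p + 1)) (1 - \<alpha>) \<le> C"
    using ev filterlim_minus_const_nat_at_top by (rule eventually_compose_filterlim)
  then have "\<forall>\<^sub>F n in sequentially. F_quantile p (n - p - 1) (1 - \<alpha>) \<le> C"
    by (simp add: diff_diff_left)
  then have "\<forall>\<^sub>F n in sequentially. \<forall>z. 0 \<le> z \<longrightarrow> z \<le> 2 * real (n - p - 1) \<longrightarrow>
    real p / (real n - real p - 1) * F_quantile p (n - p - 1) (1 - \<alpha>) * z \<le> 2 * real p * C"
    using eventually_gt_at_top[of "p + 1"]
  proof eventually_elim
    case (elim n)
    define k where "k = real n - real p - 1"
    have k: "k > 0" "real (n - p - 1) = k" using elim(2) by (auto simp: k_def of_nat_diff)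
    show ?case
    proof (intro allI impI)
      fix z :: real assume z: "0 \<le> z" "z \<le> 2 * real (n - p - 1)"
      have "real p / k * F_quantile p (n - p - 1) (1 - \<alpha>) * z \<le> real p / k * C * z"
        using elim(1) k z by (intro mult_right_mono mult_left_mono) auto
      also have "\<dots> \<le> real p / k * C * (2 * k)"
        using C k z by (intro mult_left_mono) auto
      also have "\<dots> = 2 * real p * C" using k by simp
      finally show "real p / (real n - real p - 1) * F_quantile p (n - p - 1) (1 - \<alpha>) * z
          \<le> 2 * real p * C"
        using k by (simp add: k_def)
    qed
  qed
  then show ?thesis by (rule that)
qed

section \<open>Projections for asymptotically regular designs\<close>

definition principal_submat :: "'a mat \<Rightarrow> nat list \<Rightarrow> 'a mat" where
  "principal_submat Q js = mat (length js) (length js) (\<lambda>(i, j). Q $$ (js ! i, js ! j))"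

lemma sum_reindex_nth:
  fixes v F :: "nat \<Rightarrow> real"
  assumes "\<And>i. i < r \<Longrightarrow> js ! i < p"
  shows "(\<Sum>a<p. (\<Sum>i<r. if js ! i = a then v i else 0) * F a) = (\<Sum>i<r. v i * F (js ! i))"
proof -
  have "(\<Sum>a<p. (\<Sum>i<r. if js ! i = a then v i else 0) * F a)
      = (\<Sum>i<r. \<Sum>a<p. if js ! i = a then v i * F a else 0)"
    by (subst sum.swap) (auto simp: sum_distrib_right intro!: sum.cong)
  also have "\<dots> = (\<Sum>i<r. v i * F (js ! i))"
    using assms by (intro sum.cong refl) (simp add: sum.delta)
  finally show ?thesis .
qed

definition embed_vec :: "nat \<Rightarrow> nat list \<Rightarrow> real vec \<Rightarrow> real vec" where
  "embed_vec p js v = vec p (\<lambda>a. \<Sum>i<length js. if js ! i = a then v $ i else 0)"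

lemma embed_vec_nth:
  assumes "distinct js" and "\<And>i. i < length js \<Longrightarrow> js ! i < p" and "i < length js"
  shows "embed_vec p js v $ (js ! i) = v $ i"
proof -
  have "embed_vec p js v $ (js ! i) = (\<Sum>j<length js. if j = i then v $ j else 0)"
    using assms by (auto simp: embed_vec_def nth_eq_iff_index_eq intro!: sum.cong)
  then show ?thesis using assms(3) by simp
qed

lemma quadratic_form_embed_vec:
  fixes Q :: "real mat"
  assumes Q: "Q \<in> carrier_mat p p" and js: "\<And>i. i < length js \<Longrightarrow> js ! i < p"
    and v: "v \<in> carrier_vec (length js)"
  shows "embed_vec p js v \<bullet> (Q *\<^sub>v embed_vec p js v) = v \<bullet> (principal_submat Q js *\<^sub>v v)"
proof -
  define r where "r = length js"
  define x where "x = embed_vec p js v"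
  have jsp: "\<And>i. i < r \<Longrightarrow> js ! i < p" using js by (simp add: r_def)
  have x: "x \<in> carrier_vec p" and dQ: "dim_row Q = p" "dim_col Q = p"
    using Q by (auto simp: x_def embed_vec_def)
  have "x \<bullet> (Q *\<^sub>v x) = (\<Sum>a<p. (\<Sum>i<r. if js ! i = a then v $ i else 0) * (Q *\<^sub>v x) $ a)"
    using x dQ by (simp add: scalar_prod_def x_def embed_vec_def r_def lessThan_atLeast0)
  also have "\<dots> = (\<Sum>i<r. v $ i * (Q *\<^sub>v x) $ (js ! i))"
    by (rule sum_reindex_nth[OF jsp])
  also have "\<dots> = (\<Sum>i<r. v $ i * (\<Sum>j<r. v $ j * Q $$ (js ! i, js ! j)))"
  proof (intro sum.cong refl arg_cong2[where f = "(*)"])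
    fix i assume i: "i \<in> {..<r}"
    have "(Q *\<^sub>v x) $ (js ! i) = (\<Sum>a<p. (\<Sum>j<r. if js ! j = a then v $ j else 0) * Q $$ (js ! i, a))"
      using jsp i dQ x
      by (simp add: scalar_prod_def lessThan_atLeast0 x_def embed_vec_def r_def mult.commute)
    also have "\<dots> = (\<Sum>j<r. v $ j * Q $$ (js ! i, js ! j))"
      by (rule sum_reindex_nth[OF jsp])
    finally show "(Q *\<^sub>v x) $ (js ! i) = (\<Sum>j<r. v $ j * Q $$ (js ! i, js ! j))" .
  qed
  also have "\<dots> = v \<bullet> (principal_submat Q js *\<^sub>v v)"
    using v by (simp add: scalar_prod_def principal_submat_def r_def lessThan_atLeast0 mult.commute)
  finally show ?thesis by (simp add: x_def)
qed

lemma pos_def_mat_principal_submat: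
  fixes Q :: "real mat"
  assumes Q: "Q \<in> carrier_mat p p" and pd: "pos_def_mat Q"
    and js: "distinct js" "\<And>i. i < length js \<Longrightarrow> js ! i < p"
  shows "pos_def_mat (principal_submat Q js)"
proof -
  have sym: "(principal_submat Q js)\<^sup>T = principal_submat Q js"
  proof -
    have "Q $$ (js ! j, js ! i) = Q $$ (js ! i, js ! j)" if "i < length js" "j < length js" for i j
      using that js(2) pd Q by (metis carrier_matD index_transpose_mat(1) pos_def_mat_def)
    then show ?thesis by (auto simp: principal_submat_def)
  qed
  have "0 < v \<bullet> (principal_submat Q js *\<^sub>v v)"
    if v: "v \<in> carrier_vec (length js)" "v \<noteq> 0\<^sub>v (length js)" for v
  proof -
    have "embed_vec p js v \<noteq> 0\<^sub>v p"
    proof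
      assume "embed_vec p js v = 0\<^sub>v p"
      then have "v $ i = 0" if "i < length js" for i
        using embed_vec_nth[OF js that, of v] js(2)[OF that] by simp
      then show False using v by (auto intro: eq_vecI)
    qed
    then have "0 < embed_vec p js v \<bullet> (Q *\<^sub>v embed_vec p js v)"
      using pd Q unfolding pos_def_mat_def by (auto simp: embed_vec_def)
    then show ?thesis using quadratic_form_embed_vec[OF Q js(2) v(1)] by simp
  qed
  then show ?thesis using sym unfolding pos_def_mat_def by (auto simp: principal_submat_def)
qed

lemma pos_def_mat_det_nonzero:
  fixes Q :: "real mat"
  assumes Q: "Q \<in> carrier_mat r r" and pd: "pos_def_mat Q"
  shows "det Q \<noteq> 0"
proof
  assume "det Q = 0"
  then obtain v where "v \<in> carrier_vec r" "v \<noteq> 0\<^sub>v r" "Q *\<^sub>v v = 0\<^sub>v r"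
    using det_0_iff_vec_prod_zero[OF Q] by auto
  then show False using pd Q unfolding pos_def_mat_def by force
qed

lemma pos_def_mat_diag_pos:
  fixes Q :: "real mat"
  assumes Q: "Q \<in> carrier_mat r r" and pd: "pos_def_mat Q" and j: "j < r"
  shows "0 < Q $$ (j, j)"
proof -
  have "unit_vec r j \<noteq> (0\<^sub>v r :: real vec)"
    using j by (metis index_unit_vec(1) index_zero_vec(1) zero_neq_one)
  then have "0 < unit_vec r j \<bullet> (Q *\<^sub>v unit_vec r j)"
    using pd Q unfolding pos_def_mat_def by auto
  also have "unit_vec r j \<bullet> (Q *\<^sub>v unit_vec r j) = Q $$ (j, j)"
    using Q j by (simp add: scalar_prod_left_unit scalar_prod_right_unit)
  finally show ?thesis .
qed

lemma tendsto_det: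
  fixes G :: "nat \<Rightarrow> real mat"
  assumes G: "\<And>n. G n \<in> carrier_mat r r" and Q: "Q \<in> carrier_mat r r"
    and lim: "\<And>i j. i < r \<Longrightarrow> j < r \<Longrightarrow> (\<lambda>n. G n $$ (i, j)) \<longlonglongrightarrow> Q $$ (i, j)"
  shows "(\<lambda>n. det (G n)) \<longlonglongrightarrow> det Q"
proof -
  have "(\<lambda>n. \<Sum>\<pi> \<in> {\<pi>. \<pi> permutes {0..<r}}. signof \<pi> * (\<Prod>i = 0..<r. G n $$ (i, \<pi> i)))
       \<longlonglongrightarrow> (\<Sum>\<pi> \<in> {\<pi>. \<pi> permutes {0..<r}}. signof \<pi> * (\<Prod>i = 0..<r. Q $$ (i, \<pi> i)))"
    using lim permutes_in_image by (intro tendsto_sum tendsto_mult tendsto_const tendsto_prod) fastforce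
  then show ?thesis using G Q by (simp add: det_def'[of _ r])
qed

lemma mat_inverse_Some:
  fixes G :: "real mat"
  assumes G: "G \<in> carrier_mat r r" and d: "det G \<noteq> 0"
  obtains B where "mat_inverse G = Some B" "G * B = 1\<^sub>m r" "B \<in> carrier_mat r r"
proof (cases "mat_inverse G")
  case None
  have "G \<in> Units (ring_mat TYPE(real) r undefined)" by (rule det_non_zero_imp_unit[OF G d])
  then show ?thesis using mat_inverse(1)[OF G None] by contradiction
next
  case (Some B)
  then show ?thesis using mat_inverse(2)[OF G Some] that by blast
qed

lemma scalar_prod_sum: "(y :: real vec) \<in> carrier_vec n \<Longrightarrow> x \<bullet> y = (\<Sum>i<n. x $ i * y $ i)"
  by (simp add: scalar_prod_def lessThan_atLeast0)

lemma proj_mat_mult_vec: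
  fixes A :: "real mat" and Y :: "real vec"
  assumes A: "A \<in> carrier_mat n r" and d: "det (A\<^sup>T * A) \<noteq> 0" and Y: "Y \<in> carrier_vec n"
  obtains v where "v \<in> carrier_vec r" and "proj_mat A *\<^sub>v Y = A *\<^sub>v v"
    and "A\<^sup>T *\<^sub>v Y = A\<^sup>T *\<^sub>v (A *\<^sub>v v)"
proof -
  have At: "A\<^sup>T \<in> carrier_mat r n" and G: "A\<^sup>T * A \<in> carrier_mat r r" using A by auto
  obtain B where B: "mat_inverse (A\<^sup>T * A) = Some B" "(A\<^sup>T * A) * B = 1\<^sub>m r" "B \<in> carrier_mat r r"
    by (rule mat_inverse_Some[OF G d])
  define z where "z = A\<^sup>T *\<^sub>v Y"
  define v where "v = B *\<^sub>v z"
  have z: "z \<in> carrier_vec r" and v: "v \<in> carrier_vec r"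
    using At Y B(3) by (auto simp: z_def v_def)
  have "proj_mat A *\<^sub>v Y = (A * B * A\<^sup>T) *\<^sub>v Y" using B(1) by (simp add: proj_mat_def)
  also have "\<dots> = (A * B) *\<^sub>v z"
    unfolding z_def by (rule assoc_mult_mat_vec) (use A B At Y in auto)
  also have "\<dots> = A *\<^sub>v v"
    unfolding v_def by (rule assoc_mult_mat_vec) (use A B z in auto)
  finally have PY: "proj_mat A *\<^sub>v Y = A *\<^sub>v v" .
  have "A\<^sup>T *\<^sub>v (A *\<^sub>v v) = (A\<^sup>T * A) *\<^sub>v v"
    by (rule assoc_mult_mat_vec[symmetric]) (use A At v in auto)
  also have "\<dots> = ((A\<^sup>T * A) * B) *\<^sub>v z"
    unfolding v_def by (rule assoc_mult_mat_vec[symmetric]) (use A At B(3) z in auto)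
  finally have "A\<^sup>T *\<^sub>v Y = A\<^sup>T *\<^sub>v (A *\<^sub>v v)" using B(2) z by (simp add: z_def)
  with v PY show ?thesis by (rule that)
qed

text \<open>The quadratic form of \<open>P\<^sub>A\<close> is \<open>\<parallel>A v\<parallel>\<^sup>2\<close> with \<open>A\<^sup>T A v = A\<^sup>T Y\<close>; since the \<open>j\<close>-th entry of
  \<open>A\<^sup>T Y\<close> is \<open>col A j \<bullet> Y = col A j \<bullet> A v\<close>, Cauchy-Schwarz gives the lower bound.\<close>

lemma proj_mat_quadratic_form:
  fixes A :: "real mat" and Y :: "real vec"
  assumes A: "A \<in> carrier_mat n r" and d: "det (A\<^sup>T * A) \<noteq> 0" and Y: "Y \<in> carrier_vec n"
  shows "0 \<le> Y \<bullet> (proj_mat A *\<^sub>v Y)"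
    and "j < r \<Longrightarrow> (col A j \<bullet> Y)\<^sup>2 \<le> (col A j \<bullet> col A j) * (Y \<bullet> (proj_mat A *\<^sub>v Y))"
proof -
  obtain v where v: "v \<in> carrier_vec r" and PY: "proj_mat A *\<^sub>v Y = A *\<^sub>v v"
    and normal_eq: "A\<^sup>T *\<^sub>v Y = A\<^sup>T *\<^sub>v (A *\<^sub>v v)"
    by (rule proj_mat_mult_vec[OF A d Y])
  have Av: "A *\<^sub>v v \<in> carrier_vec n" using A v by simp
  have "Y \<bullet> (proj_mat A *\<^sub>v Y) = (A\<^sup>T *\<^sub>v Y) \<bullet> v"
    unfolding PY using transpose_vec_mult_scalar[OF A v Y] by simp
  also have "\<dots> = (A *\<^sub>v v) \<bullet> (A *\<^sub>v v)"
    unfolding normal_eq using transpose_vec_mult_scalar[OF A v Av] by simp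
  finally have quad: "Y \<bullet> (proj_mat A *\<^sub>v Y) = (\<Sum>i<n. ((A *\<^sub>v v) $ i)\<^sup>2)"
    by (simp add: scalar_prod_sum[OF Av] power2_eq_square)
  then show "0 \<le> Y \<bullet> (proj_mat A *\<^sub>v Y)" by (simp add: sum_nonneg)
  assume j: "j < r"
  have w: "col A j \<in> carrier_vec n" using A col_dim[of A j] by simp
  have "col A j \<bullet> Y = (A\<^sup>T *\<^sub>v Y) $ j" using A Y j by simp
  also have "\<dots> = col A j \<bullet> (A *\<^sub>v v)" using A Av j by (subst normal_eq) simp
  finally have "(col A j \<bullet> Y)\<^sup>2 = (\<Sum>i<n. col A j $ i * (A *\<^sub>v v) $ i)\<^sup>2"
    by (simp add: scalar_prod_sum[OF Av])
  also have "\<dots> \<le> (\<Sum>i<n. (col A j $ i)\<^sup>2) * (\<Sum>i<n. ((A *\<^sub>v v) $ i)\<^sup>2)"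
    by (rule Cauchy_Schwarz_ineq_sum)
  finally show "(col A j \<bullet> Y)\<^sup>2 \<le> (col A j \<bullet> col A j) * (Y \<bullet> (proj_mat A *\<^sub>v Y))"
    by (simp add: quad scalar_prod_sum[OF w] power2_eq_square)
qed

locale asymptotic_design =
  fixes A :: "nat \<Rightarrow> real mat" and r :: nat and Q :: "real mat"
  assumes design_carrier: "\<And>n. A n \<in> carrier_mat n r"
    and limit_carrier: "Q \<in> carrier_mat r r"
    and limit_pos_def: "pos_def_mat Q"
    and gram_limit: "\<And>i j. i < r \<Longrightarrow> j < r \<Longrightarrow>
      (\<lambda>n. (1 / real n) * ((A n)\<^sup>T * A n) $$ (i, j)) \<longlonglongrightarrow> Q $$ (i, j)"
begin

lemma eventually_det_gram_nonzero: "\<forall>\<^sub>F n in sequentially. det ((A n)\<^sup>T * A n) \<noteq> 0"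
proof -
  have gram: "(A n)\<^sup>T * A n \<in> carrier_mat r r" for n using design_carrier[of n] by simp
  have entry: "((1 / real n) \<cdot>\<^sub>m ((A n)\<^sup>T * A n)) $$ (i, j) = (1 / real n) * ((A n)\<^sup>T * A n) $$ (i, j)"
    if "i < r" "j < r" for n i j
    using that carrier_matD[OF design_carrier[of n]] by simp
  have "(\<lambda>n. det ((1 / real n) \<cdot>\<^sub>m ((A n)\<^sup>T * A n))) \<longlonglongrightarrow> det Q"
    using gram gram_limit limit_carrier by (intro tendsto_det[of _ r]) (auto simp: entry)
  then have "\<forall>\<^sub>F n in sequentially. det ((1 / real n) \<cdot>\<^sub>m ((A n)\<^sup>T * A n)) \<noteq> 0"
    using pos_def_mat_det_nonzero[OF limit_carrier limit_pos_def] by (rule tendsto_imp_eventually_ne)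
  then show ?thesis by eventually_elim (use gram in auto)
qed

lemma eventually_proj_mat_quadratic_nonneg:
  "\<forall>\<^sub>F n in sequentially. \<forall>Y \<in> carrier_vec n. 0 \<le> Y \<bullet> (proj_mat (A n) *\<^sub>v Y)"
  using eventually_det_gram_nonzero by eventually_elim (use proj_mat_quadratic_form(1) design_carrier in blast)

lemma eventually_col_norm_pos:
  assumes "j < r"
  shows "\<forall>\<^sub>F n in sequentially. 0 < col (A n) j \<bullet> col (A n) j"
proof -
  have "\<forall>\<^sub>F n in sequentially. 0 < (1 / real n) * ((A n)\<^sup>T * A n) $$ (j, j)"
    using gram_limit[OF assms assms] pos_def_mat_diag_pos[OF limit_carrier limit_pos_def assms]
    by (rule order_tendstoD(1))
  then show ?thesis
  proof eventually_elim
    case (elim n)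
    have "((A n)\<^sup>T * A n) $$ (j, j) = col (A n) j \<bullet> col (A n) j"
      using design_carrier[of n] assms by simp
    then show ?case using elim by (simp add: zero_less_divide_iff)
  qed
qed
end

lemma asymptotic_design_drop_cols:
  fixes M :: "nat set"
  assumes "asymptotic_design X p Q"
  defines "js \<equiv> filter (\<lambda>j. j \<notin> M) [0..<p]"
  shows "asymptotic_design (\<lambda>n. drop_cols (X n) M) (length js) (principal_submat Q js)"
proof -
  interpret asymptotic_design X p Q by fact
  have js: "distinct js" "\<And>i. i < length js \<Longrightarrow> js ! i < p"
    using nth_mem[of _ js] by (auto simp: js_def)
  have carrier: "drop_cols (X n) M \<in> carrier_mat n (length js)" for n
    using design_carrier[of n] mat_of_cols_carrier(1)[of n "map (col (X n)) js"]
    by (simp add: drop_cols_def js_def)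
  have cols: "col (drop_cols (X n) M) i = col (X n) (js ! i)" if "i < length js" for n i
    using that carrier_matD[OF design_carrier[of n]] col_dim[of "X n"] unfolding drop_cols_def
    by (subst col_mat_of_cols) (auto simp: js_def)
  have entry: "((drop_cols (X n) M)\<^sup>T * drop_cols (X n) M) $$ (i, j) = ((X n)\<^sup>T * X n) $$ (js ! i, js ! j)"
    if "i < length js" "j < length js" for n i j
    using that js(2) carrier[of n] design_carrier[of n] by (simp add: cols)
  show ?thesis
  proof
    show "drop_cols (X n) M \<in> carrier_mat n (length js)" for n by (rule carrier)
    show "principal_submat Q js \<in> carrier_mat (length js) (length js)"
      by (simp add: principal_submat_def)
    show "pos_def_mat (principal_submat Q js)"
      by (rule pos_def_mat_principal_submat[OF limit_carrier limit_pos_def js])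
    fix i j assume "i < length js" "j < length js"
    then show "(\<lambda>n. 1 / real n * ((drop_cols (X n) M)\<^sup>T * drop_cols (X n) M) $$ (i, j))
        \<longlonglongrightarrow> principal_submat Q js $$ (i, j)"
      using gram_limit[of "js ! i" "js ! j"] js(2) by (simp add: entry principal_submat_def)
  qed
qed

section \<open>Linear combinations of Gaussian noise\<close>

lemma (in prob_space) distributed_normal_unit_combination:
  fixes \<epsilon> :: "'a \<Rightarrow> nat \<Rightarrow> real"
  assumes \<sigma>: "\<sigma> > 0"
    and indep: "indep_vars (\<lambda>_. borel) (\<lambda>i \<omega>. \<epsilon> \<omega> i) {..<n}"
    and gauss: "\<And>i. i < n \<Longrightarrow> distributed M lborel (\<lambda>\<omega>. \<epsilon> \<omega> i) (normal_density 0 \<sigma>)"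
    and u: "(\<Sum>i<n. (u i)\<^sup>2) = 1"
  shows "distributed M lborel (\<lambda>\<omega>. \<Sum>i<n. u i * \<epsilon> \<omega> i) (normal_density 0 \<sigma>)"
proof -
  \<comment> \<open>\<open>sum_indep_normal\<close> needs positive variances, so drop the indices with \<open>u i = 0\<close>\<close>
  define I where "I = {i. i < n \<and> u i \<noteq> 0}"
  have restrict: "(\<Sum>i<n. f i) = (\<Sum>i\<in>I. f i)" if "\<And>i. i < n \<Longrightarrow> u i = 0 \<Longrightarrow> f i = 0"
    for f :: "nat \<Rightarrow> real"
    by (rule sum.mono_neutral_right) (use that in \<open>auto simp: I_def\<close>)
  have uI: "(\<Sum>i\<in>I. (u i)\<^sup>2) = 1" using u restrict[of "\<lambda>i. (u i)\<^sup>2"] by simp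
  have "indep_vars (\<lambda>_. borel) (\<lambda>i \<omega>. \<epsilon> \<omega> i) I"
    by (rule indep_vars_subset[OF indep]) (auto simp: I_def)
  then have "indep_vars (\<lambda>_. borel) (\<lambda>i \<omega>. u i * \<epsilon> \<omega> i) I"
    by (rule indep_vars_compose2[where Y = "\<lambda>i x. u i * x"]) auto
  moreover have "distributed M lborel (\<lambda>\<omega>. u i * \<epsilon> \<omega> i) (normal_density 0 (\<bar>u i\<bar> * \<sigma>))"
    if "i \<in> I" for i
    using normal_density_affine[OF gauss \<sigma>, of i "u i" 0] that by (simp add: I_def)
  moreover have "I \<noteq> {}" using uI by auto
  ultimately have "distributed M lborel (\<lambda>\<omega>. \<Sum>i\<in>I. u i * \<epsilon> \<omega> i)
      (normal_density (\<Sum>i\<in>I. 0) (sqrt (\<Sum>i\<in>I. (\<bar>u i\<bar> * \<sigma>)\<^sup>2)))"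
    using \<sigma> by (intro sum_indep_normal) (auto simp: I_def)
  moreover have "sqrt (\<Sum>i\<in>I. (\<bar>u i\<bar> * \<sigma>)\<^sup>2) = \<sigma>"
    using uI \<sigma> by (simp add: power_mult_distrib sum_distrib_right[symmetric])
  ultimately show ?thesis by (simp add: restrict)
qed

lemma (in prob_space) prob_distributed_atLeast:
  fixes S :: "'a \<Rightarrow> real"
  assumes "distributed M lborel S f"
  shows "prob {\<omega> \<in> space M. t \<le> S \<omega>} = measure (density lborel f) {t..}"
proof -
  have "prob {\<omega> \<in> space M. t \<le> S \<omega>} = prob (S -` {t..} \<inter> space M)"
    by (intro arg_cong[where f = prob]) auto
  also have "\<dots> = measure (distr M lborel S) {t..}"
    using distributed_measurable[OF assms] by (intro measure_distr[symmetric]) auto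
  finally show ?thesis by (simp add: distributed_distr_eq_density[OF assms])
qed

lemma (in prob_space) normal_tail_le_prob_shifted_sq:
  assumes S: "distributed M lborel S (normal_density 0 \<sigma>)" and \<sigma>: "\<sigma> > 0" and t: "t \<ge> 0"
  shows "measure (density lborel (normal_density 0 \<sigma>)) {t..} \<le> prob {\<omega> \<in> space M. t\<^sup>2 \<le> (c + S \<omega>)\<^sup>2}"
proof -
  have [measurable]: "S \<in> borel_measurable M"
    using distributed_measurable[OF S] by simp
  \<comment> \<open>\<open>-S\<close> is again centred normal, so \<open>S\<close> may be replaced by whichever of \<open>\<plusminus>S\<close> has the sign of \<open>c\<close>\<close>
  obtain S' where S': "distributed M lborel S' (normal_density 0 \<sigma>)"
    and sub: "{\<omega> \<in> space M. t \<le> S' \<omega>} \<subseteq> {\<omega> \<in> space M. t\<^sup>2 \<le> (c + S \<omega>)\<^sup>2}"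
  proof (cases "c \<ge> 0")
    case True
    then show ?thesis using t by (intro that[OF S]) (auto intro!: power_mono)
  next
    case False
    have "distributed M lborel (\<lambda>\<omega>. 0 + (-1) * S \<omega>) (normal_density 0 \<sigma>)"
      using normal_density_affine[OF S \<sigma>, of "-1" 0] by simp
    moreover have "t\<^sup>2 \<le> (c + S \<omega>)\<^sup>2" if "t \<le> 0 + (-1) * S \<omega>" for \<omega>
    proof -
      have "t\<^sup>2 \<le> (- (c + S \<omega>))\<^sup>2" using False t that by (intro power_mono) auto
      then show ?thesis by (simp only: power2_minus)
    qed
    ultimately show ?thesis by (intro that) auto
  qed
  have "measure (density lborel (normal_density 0 \<sigma>)) {t..} = prob {\<omega> \<in> space M. t \<le> S' \<omega>}"
    by (rule prob_distributed_atLeast[OF S', symmetric])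
  also have "\<dots> \<le> prob {\<omega> \<in> space M. t\<^sup>2 \<le> (c + S \<omega>)\<^sup>2}"
    by (rule finite_measure_mono[OF sub]) measurable
  finally show ?thesis .
qed

lemma (in prob_space) normal_tail_le_prob_inner_sq:
  fixes \<epsilon> :: "'a \<Rightarrow> nat \<Rightarrow> real" and w b :: "real vec"
  assumes \<sigma>: "\<sigma> > 0"
    and indep: "indep_vars (\<lambda>_. borel) (\<lambda>i \<omega>. \<epsilon> \<omega> i) {..<n}"
    and gauss: "\<And>i. i < n \<Longrightarrow> distributed M lborel (\<lambda>\<omega>. \<epsilon> \<omega> i) (normal_density 0 \<sigma>)"
    and w: "w \<in> carrier_vec n" "0 < w \<bullet> w" and b: "b \<in> carrier_vec n" and K: "K \<ge> 0"
  shows "measure (density lborel (normal_density 0 \<sigma>)) {\<sigma> * sqrt K..}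
    \<le> prob {\<omega> \<in> space M. K * \<sigma>\<^sup>2 * (w \<bullet> w) \<le> (w \<bullet> (b + vec n (\<epsilon> \<omega>)))\<^sup>2}"
proof -
  define s where "s = sqrt (w \<bullet> w)"
  define u where "u i = w $ i / s" for i
  define c where "c = (w \<bullet> b) / s"
  have s: "s > 0" "s\<^sup>2 = w \<bullet> w" using w(2) by (auto simp: s_def)
  have "(\<Sum>i<n. (u i)\<^sup>2) = (w \<bullet> w) / s\<^sup>2"
    by (simp add: u_def power_divide sum_divide_distrib scalar_prod_sum[OF w(1)] power2_eq_square)
  then have "distributed M lborel (\<lambda>\<omega>. \<Sum>i<n. u i * \<epsilon> \<omega> i) (normal_density 0 \<sigma>)"
    using s by (intro distributed_normal_unit_combination[OF \<sigma> indep gauss]) auto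
  then have "measure (density lborel (normal_density 0 \<sigma>)) {\<sigma> * sqrt K..}
      \<le> prob {\<omega> \<in> space M. (\<sigma> * sqrt K)\<^sup>2 \<le> (c + (\<Sum>i<n. u i * \<epsilon> \<omega> i))\<^sup>2}"
    using \<sigma> K by (intro normal_tail_le_prob_shifted_sq) auto
  also have "{\<omega> \<in> space M. (\<sigma> * sqrt K)\<^sup>2 \<le> (c + (\<Sum>i<n. u i * \<epsilon> \<omega> i))\<^sup>2}
      = {\<omega> \<in> space M. K * \<sigma>\<^sup>2 * (w \<bullet> w) \<le> (w \<bullet> (b + vec n (\<epsilon> \<omega>)))\<^sup>2}"
  proof -
    have "w \<bullet> (b + vec n (\<epsilon> \<omega>)) = s * (c + (\<Sum>i<n. u i * \<epsilon> \<omega> i))" for \<omega>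
    proof -
      have "w \<bullet> (b + vec n (\<epsilon> \<omega>)) = w \<bullet> b + w \<bullet> vec n (\<epsilon> \<omega>)"
        by (rule scalar_prod_add_distrib[OF w(1) b]) simp
      also have "w \<bullet> vec n (\<epsilon> \<omega>) = (\<Sum>i<n. w $ i * \<epsilon> \<omega> i)"
        by (simp add: scalar_prod_sum[of _ n])
      finally show ?thesis
        using s(1) by (simp add: c_def u_def distrib_left sum_distrib_left)
    qed
    moreover have "K * \<sigma>\<^sup>2 * s\<^sup>2 \<le> (s * x)\<^sup>2 \<longleftrightarrow> (\<sigma> * sqrt K)\<^sup>2 \<le> x\<^sup>2" for x
      using s(1) K by (simp add: power_mult_distrib mult.commute[of _ "s\<^sup>2"] mult_le_cancel_left_pos)
        (simp add: mult.commute)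
    ultimately show ?thesis by (simp add: s(2)[symmetric])
  qed
  finally show ?thesis .
qed

lemma borel_measurable_quadratic_form:
  fixes P :: "real mat" and b :: "real vec" and \<epsilon> :: "'a \<Rightarrow> nat \<Rightarrow> real"
  assumes P: "P \<in> carrier_mat n n" and b: "b \<in> carrier_vec n"
    and \<epsilon>: "\<And>i. i < n \<Longrightarrow> (\<lambda>\<omega>. \<epsilon> \<omega> i) \<in> borel_measurable M"
  shows "(\<lambda>\<omega>. (b + vec n (\<epsilon> \<omega>)) \<bullet> (P *\<^sub>v (b + vec n (\<epsilon> \<omega>)))) \<in> borel_measurable M"
proof -
  have "(b + vec n (\<epsilon> \<omega>)) \<bullet> (P *\<^sub>v (b + vec n (\<epsilon> \<omega>)))
      = (\<Sum>i<n. (b $ i + \<epsilon> \<omega> i) * (\<Sum>j<n. P $$ (i, j) * (b $ j + \<epsilon> \<omega> j)))" for \<omega>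
    using P b by (simp add: scalar_prod_sum[of _ n] row_def)
  then show ?thesis
    using \<epsilon> by (auto intro!: borel_measurable_sum borel_measurable_add borel_measurable_times)
qed

lemma (in prob_space) normal_tail_le_prob_proj_mat_quadratic:
  fixes \<epsilon> :: "'a \<Rightarrow> nat \<Rightarrow> real" and A :: "real mat" and b :: "real vec"
  assumes \<sigma>: "\<sigma> > 0"
    and indep: "indep_vars (\<lambda>_. borel) (\<lambda>i \<omega>. \<epsilon> \<omega> i) {..<n}"
    and gauss: "\<And>i. i < n \<Longrightarrow> distributed M lborel (\<lambda>\<omega>. \<epsilon> \<omega> i) (normal_density 0 \<sigma>)"
    and A: "A \<in> carrier_mat n r" and d: "det (A\<^sup>T * A) \<noteq> 0"
    and j: "j < r" and w: "0 < col A j \<bullet> col A j"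
    and b: "b \<in> carrier_vec n" and K: "K \<ge> 0" "t \<le> K * \<sigma>\<^sup>2"
  shows "measure (density lborel (normal_density 0 \<sigma>)) {\<sigma> * sqrt K..}
    \<le> prob {\<omega> \<in> space M. t \<le> (b + vec n (\<epsilon> \<omega>)) \<bullet> (proj_mat A *\<^sub>v (b + vec n (\<epsilon> \<omega>)))}"
proof -
  define Y where "Y \<omega> = b + vec n (\<epsilon> \<omega>)" for \<omega>
  have Y: "Y \<omega> \<in> carrier_vec n" for \<omega> using b by (simp add: Y_def)
  have "{\<omega> \<in> space M. K * \<sigma>\<^sup>2 * (col A j \<bullet> col A j) \<le> (col A j \<bullet> Y \<omega>)\<^sup>2}
      \<subseteq> {\<omega> \<in> space M. t \<le> Y \<omega> \<bullet> (proj_mat A *\<^sub>v Y \<omega>)}"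
  proof safe
    fix \<omega> assume "\<omega> \<in> space M" and large: "K * \<sigma>\<^sup>2 * (col A j \<bullet> col A j) \<le> (col A j \<bullet> Y \<omega>)\<^sup>2"
    with proj_mat_quadratic_form(2)[OF A d Y[of \<omega>] j]
    have "K * \<sigma>\<^sup>2 * (col A j \<bullet> col A j) \<le> (col A j \<bullet> col A j) * (Y \<omega> \<bullet> (proj_mat A *\<^sub>v Y \<omega>))"
      by linarith
    then have "K * \<sigma>\<^sup>2 \<le> Y \<omega> \<bullet> (proj_mat A *\<^sub>v Y \<omega>)"
      using w by (simp add: mult.commute[of _ "col A j \<bullet> col A j"])
    then show "t \<le> Y \<omega> \<bullet> (proj_mat A *\<^sub>v Y \<omega>)" using K by linarith
  qed
  moreover have "{\<omega> \<in> space M. t \<le> Y \<omega> \<bullet> (proj_mat A *\<^sub>v Y \<omega>)} \<in> events"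
    using A b distributed_measurable[OF gauss]
    unfolding Y_def by (measurable, intro borel_measurable_quadratic_form) (auto simp: proj_mat_def)
  ultimately have "prob {\<omega> \<in> space M. K * \<sigma>\<^sup>2 * (col A j \<bullet> col A j) \<le> (col A j \<bullet> Y \<omega>)\<^sup>2}
      \<le> prob {\<omega> \<in> space M. t \<le> Y \<omega> \<bullet> (proj_mat A *\<^sub>v Y \<omega>)}"
    by (rule finite_measure_mono)
  moreover have "col A j \<in> carrier_vec n" using A col_dim[of A j] by simp
  ultimately show ?thesis
    using normal_tail_le_prob_inner_sq[OF \<sigma> indep gauss _ w b K(1)] by (simp add: Y_def)
qed

lemma (in asymptotic_design) proj_mat_quadratic_large_with_positive_prob:
  fixes M :: "'a measure" and b :: "nat \<Rightarrow> real vec" and \<epsilon> :: "nat \<Rightarrow> 'a \<Rightarrow> nat \<Rightarrow> real"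
  assumes "prob_space M" and \<sigma>: "\<sigma> > 0" and r: "0 < r"
    and b: "\<And>n. b n \<in> carrier_vec n"
    and indep: "\<And>n. prob_space.indep_vars M (\<lambda>_. borel) (\<lambda>i \<omega>. \<epsilon> n \<omega> i) {..<n}"
    and gauss: "\<And>n i. i < n \<Longrightarrow> distributed M lborel (\<lambda>\<omega>. \<epsilon> n \<omega> i) (normal_density 0 \<sigma>)"
  shows "\<exists>\<delta> > 0. \<forall>\<^sub>F n in sequentially. \<delta> \<le> measure M {\<omega> \<in> space M.
    t \<le> (b n + vec n (\<epsilon> n \<omega>)) \<bullet> (proj_mat (A n) *\<^sub>v (b n + vec n (\<epsilon> n \<omega>)))}"
proof -
  interpret prob_space M by fact
  define K where "K = max t 0 / \<sigma>\<^sup>2"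
  define \<delta> where "\<delta> = measure (density lborel (normal_density 0 \<sigma>)) {\<sigma> * sqrt K..}"
  have K: "K \<ge> 0" "t \<le> K * \<sigma>\<^sup>2" using \<sigma> by (auto simp: K_def)
  have "finite_measure (density lborel (normal_density 0 \<sigma>))"
    by (intro prob_space.axioms(1) prob_space_normal_density \<sigma>)
  then have "\<delta> > 0"
    unfolding \<delta>_def using normal_density_pos[OF \<sigma>] by (intro measure_density_atLeast_pos) auto
  moreover have "\<forall>\<^sub>F n in sequentially. \<delta> \<le> measure M {\<omega> \<in> space M.
    t \<le> (b n + vec n (\<epsilon> n \<omega>)) \<bullet> (proj_mat (A n) *\<^sub>v (b n + vec n (\<epsilon> n \<omega>)))}"
    using eventually_det_gram_nonzero eventually_col_norm_pos[OF r]
  proof eventually_elim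
    case (elim n)
    show ?case unfolding \<delta>_def
      by (rule normal_tail_le_prob_proj_mat_quadratic[OF \<sigma> indep gauss[where n = n]
            design_carrier elim(1) r elim(2) b K])
  qed
  ultimately show ?thesis by blast
qed

section \<open>Combining the independent factors\<close>

lemma eventually_sequentially_ex_gt:
  assumes "\<forall>\<^sub>F n in sequentially. P n"
  shows "\<exists>N > 0. \<forall>n > N. P n"
proof -
  obtain N where "\<forall>n \<ge> N. P n" using assms by (auto simp: eventually_sequentially)
  then show ?thesis by (intro exI[of _ "Suc N"]) auto
qed

lemma (in prob_space) prob_eq_measure_distr:
  fixes X :: "'a \<Rightarrow> real"
  assumes "random_variable borel X" and "S \<in> sets borel"
  shows "prob {\<omega> \<in> space M. X \<omega> \<in> S} = measure (distr M borel X) S"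
proof -
  have "prob {\<omega> \<in> space M. X \<omega> \<in> S} = prob (X -` S \<inter> space M)"
    by (intro arg_cong[where f = prob]) auto
  then show ?thesis using assms by (simp add: measure_distr)
qed

lemma (in prob_space) prob_sub_mult_ge_of_indep_vars:
  fixes U V T :: "'a \<Rightarrow> real"
  assumes indep: "indep_vars (\<lambda>_. borel)
      (\<lambda>k \<omega>. if k = (0::nat) then U \<omega> else if k = 1 then V \<omega> else T \<omega>) {0, 1, 2}"
    and c: "\<And>z. 0 \<le> z \<Longrightarrow> z \<le> z\<^sub>0 \<Longrightarrow> c * z \<le> a + b"
  shows "prob {\<omega> \<in> space M. a \<le> U \<omega>} * prob {\<omega> \<in> space M. 0 \<le> V \<omega> \<and> V \<omega> \<le> z\<^sub>0}
      * prob {\<omega> \<in> space M. T \<omega> / s \<le> - b}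
    \<le> prob {\<omega> \<in> space M. U \<omega> - c * V \<omega> \<ge> T \<omega> / s}"
proof -
  define X where "X = (\<lambda>k \<omega>. if k = (0::nat) then U \<omega> else if k = 1 then V \<omega> else T \<omega>)"
  define S where "S = (\<lambda>k::nat. if k = 0 then {a..} else if k = 1 then {0..z\<^sub>0} else {x. x / s \<le> - b})"
  have rv: "random_variable borel (X k)" if "k \<in> {0, 1, 2}" for k
    using indep that unfolding indep_vars_def X_def by blast
  have [measurable]: "U \<in> borel_measurable M" "V \<in> borel_measurable M" "T \<in> borel_measurable M"
    using rv[of 0] rv[of 1] rv[of 2] by (simp_all add: X_def)
  have "prob (\<Inter>k\<in>{0, 1, 2}. X k -` S k \<inter> space M) = (\<Prod>k\<in>{0, 1, 2}. prob (X k -` S k \<inter> space M))"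
    using indep unfolding X_def by (rule indep_varsD) (auto simp: S_def)
  moreover have "(\<Inter>k\<in>{0, 1, 2}. X k -` S k \<inter> space M)
      = {\<omega> \<in> space M. a \<le> U \<omega> \<and> (0 \<le> V \<omega> \<and> V \<omega> \<le> z\<^sub>0) \<and> T \<omega> / s \<le> - b}"
    by (auto simp: X_def S_def)
  ultimately have "prob {\<omega> \<in> space M. a \<le> U \<omega>} * prob {\<omega> \<in> space M. 0 \<le> V \<omega> \<and> V \<omega> \<le> z\<^sub>0}
      * prob {\<omega> \<in> space M. T \<omega> / s \<le> - b}
      = prob {\<omega> \<in> space M. a \<le> U \<omega> \<and> (0 \<le> V \<omega> \<and> V \<omega> \<le> z\<^sub>0) \<and> T \<omega> / s \<le> - b}"
    by (simp add: X_def S_def vimage_def Int_def conj_commute mult.assoc)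
  also have "\<dots> \<le> prob {\<omega> \<in> space M. U \<omega> - c * V \<omega> \<ge> T \<omega> / s}"
  proof (rule finite_measure_mono)
    show "{\<omega> \<in> space M. a \<le> U \<omega> \<and> (0 \<le> V \<omega> \<and> V \<omega> \<le> z\<^sub>0) \<and> T \<omega> / s \<le> - b}
        \<subseteq> {\<omega> \<in> space M. U \<omega> - c * V \<omega> \<ge> T \<omega> / s}"
      using c by force
  qed measurable
  finally show ?thesis .
qed

lemma (in prob_space) prob_sub_mult_chi_sq_ge:
  fixes U V T :: "'a \<Rightarrow> real"
  assumes indep: "indep_vars (\<lambda>_. borel)
      (\<lambda>k \<omega>. if k = (0::nat) then U \<omega> else if k = 1 then V \<omega> else T \<omega>) {0, 1, 2}"
    and V_distr: "distr M borel V = chi_sq_measure k" and k: "k \<ge> 1"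
    and c: "\<And>z. 0 \<le> z \<Longrightarrow> z \<le> 2 * real k \<Longrightarrow> c * z \<le> a + b"
  shows "prob {\<omega> \<in> space M. a \<le> U \<omega>} * (1/2) * prob {\<omega> \<in> space M. T \<omega> / s \<le> - b}
    \<le> prob {\<omega> \<in> space M. U \<omega> - c * V \<omega> \<ge> T \<omega> / s}"
proof -
  have "random_variable borel V" using indep by (simp add: indep_vars_def)
  then have "1/2 \<le> prob {\<omega> \<in> space M. 0 \<le> V \<omega> \<and> V \<omega> \<le> 2 * real k}"
    using prob_eq_measure_distr[of V "{0..2 * real k}"] V_distr chi_sq_measure_atLeastAtMost_ge_half[OF k]
    by simp
  then have "prob {\<omega> \<in> space M. a \<le> U \<omega>} * (1/2) * prob {\<omega> \<in> space M. T \<omega> / s \<le> - b}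
      \<le> prob {\<omega> \<in> space M. a \<le> U \<omega>} * prob {\<omega> \<in> space M. 0 \<le> V \<omega> \<and> V \<omega> \<le> 2 * real k}
        * prob {\<omega> \<in> space M. T \<omega> / s \<le> - b}"
    by (intro mult_right_mono mult_left_mono) auto
  also have "\<dots> \<le> prob {\<omega> \<in> space M. U \<omega> - c * V \<omega> \<ge> T \<omega> / s}"
    using c by (rule prob_sub_mult_ge_of_indep_vars[OF indep])
  finally show ?thesis .
qed

lemma exists_separating_thresholds:
  fixes W :: "'a \<Rightarrow> real" and D :: "nat \<Rightarrow> 'a \<Rightarrow> real"
  assumes "prob_space M" and W: "W \<in> borel_measurable M"
    and W_distr: "distr M borel W = chi_sq_measure m" and s: "s > 0"
    and nonpos: "\<forall>\<^sub>F n in sequentially. \<forall>\<omega> \<in> space M. D n \<omega> \<le> 0"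
    and large: "\<And>t. m = 0 \<Longrightarrow>
      \<exists>\<delta> > 0. \<forall>\<^sub>F n in sequentially. \<delta> \<le> measure M {\<omega> \<in> space M. D n \<omega> \<le> - t}"
  obtains a b \<delta>\<^sub>W \<delta>\<^sub>D where "K \<le> a + b" and "0 < \<delta>\<^sub>W" and "0 < \<delta>\<^sub>D"
    and "\<delta>\<^sub>W \<le> measure M {\<omega> \<in> space M. a \<le> W \<omega>}"
    and "\<forall>\<^sub>F n in sequentially. \<delta>\<^sub>D \<le> measure M {\<omega> \<in> space M. D n \<omega> / s \<le> - b}"
proof -
  interpret prob_space M by fact
  have W_tail: "measure M {\<omega> \<in> space M. a \<le> W \<omega>} = measure (chi_sq_measure m) {a..}" for a
    using prob_eq_measure_distr[OF W, of "{a..}"] W_distr by simp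
  \<comment> \<open>either \<open>W\<close> itself exceeds \<open>K\<close> with positive probability, or \<open>m = 0\<close>, \<open>W = 0\<close> and \<open>- D\<close>
    has to exceed \<open>K s\<close>\<close>
  show ?thesis
  proof (cases "m = 0")
    case False
    have "\<forall>\<^sub>F n in sequentially. 1 \<le> measure M {\<omega> \<in> space M. D n \<omega> / s \<le> - 0}"
      using nonpos
    proof eventually_elim
      case (elim n)
      then have "{\<omega> \<in> space M. D n \<omega> / s \<le> - 0} = space M" using s by (auto simp: divide_nonpos_pos)
      then show ?case by (simp add: prob_space)
    qed
    then show ?thesis
      using W_tail chi_sq_measure_atLeast_pos[of m K] False by (intro that[of K 0 _ 1]) auto
  next
    case True
    obtain \<delta> where "\<delta> > 0"
      and "\<forall>\<^sub>F n in sequentially. \<delta> \<le> measure M {\<omega> \<in> space M. D n \<omega> \<le> - (K * s)}"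
      using large[OF True] by blast
    moreover have "{\<omega> \<in> space M. D n \<omega> \<le> - (K * s)} = {\<omega> \<in> space M. D n \<omega> / s \<le> - K}"
      for n using s by (auto simp: field_simps)
    moreover have "measure M {\<omega> \<in> space M. 0 \<le> W \<omega>} = 1"
      using W_tail[of 0] True by (simp add: chi_sq_measure_def measure_return)
    ultimately show ?thesis by (intro that[of 0 K 1 \<delta>]) auto
  qed
qed

lemma (in prob_space) eventually_prob_sub_mult_ge:
  fixes W :: "'a \<Rightarrow> real" and Z D :: "nat \<Rightarrow> 'a \<Rightarrow> real" and c :: "nat \<Rightarrow> real"
    and k :: "nat \<Rightarrow> nat"
  assumes W: "W \<in> borel_measurable M" and W_distr: "distr M borel W = chi_sq_measure m"
    and s: "s > 0"
    and indep: "\<forall>\<^sub>F n in sequentially. indep_vars (\<lambda>_. borel)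
      (\<lambda>i \<omega>. if i = (0::nat) then W \<omega> else if i = 1 then Z n \<omega> else D n \<omega>) {0, 1, 2}"
    and Z_distr: "\<forall>\<^sub>F n in sequentially. 1 \<le> k n \<and> distr M borel (Z n) = chi_sq_measure (k n)"
    and c: "\<forall>\<^sub>F n in sequentially. \<forall>z. 0 \<le> z \<longrightarrow> z \<le> 2 * real (k n) \<longrightarrow> c n * z \<le> K"
    and nonpos: "\<forall>\<^sub>F n in sequentially. \<forall>\<omega> \<in> space M. D n \<omega> \<le> 0"
    and large: "\<And>t. m = 0 \<Longrightarrow>
      \<exists>\<delta> > 0. \<forall>\<^sub>F n in sequentially. \<delta> \<le> prob {\<omega> \<in> space M. D n \<omega> \<le> - t}"
  shows "\<exists>\<delta> > 0. \<forall>\<^sub>F n in sequentially. \<delta> \<le> prob {\<omega> \<in> space M. W \<omega> - c n * Z n \<omega> \<ge> D n \<omega> / s}"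
proof -
  obtain a b \<delta>\<^sub>W \<delta>\<^sub>D where "K \<le> a + b" "0 < \<delta>\<^sub>W" "0 < \<delta>\<^sub>D"
    and W_large: "\<delta>\<^sub>W \<le> prob {\<omega> \<in> space M. a \<le> W \<omega>}"
    and D_small: "\<forall>\<^sub>F n in sequentially. \<delta>\<^sub>D \<le> prob {\<omega> \<in> space M. D n \<omega> / s \<le> - b}"
    using exists_separating_thresholds[OF prob_space_axioms W W_distr s nonpos large] by blast
  have "\<forall>\<^sub>F n in sequentially.
      \<delta>\<^sub>W * (1/2) * \<delta>\<^sub>D \<le> prob {\<omega> \<in> space M. W \<omega> - c n * Z n \<omega> \<ge> D n \<omega> / s}"
    using indep Z_distr c D_small
  proof eventually_elim
    case (elim n)
    have "c n * z \<le> a + b" if "0 \<le> z" "z \<le> 2 * real (k n)" for z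
      using elim(3) that \<open>K \<le> a + b\<close> by (meson order.trans)
    note bound = prob_sub_mult_chi_sq_ge[OF elim(1) conjunct2[OF elim(2)] conjunct1[OF elim(2)] this]
    have "\<delta>\<^sub>W * (1/2) * \<delta>\<^sub>D
        \<le> prob {\<omega> \<in> space M. a \<le> W \<omega>} * (1/2) * prob {\<omega> \<in> space M. D n \<omega> / s \<le> - b}"
      using W_large elim(4) \<open>0 < \<delta>\<^sub>W\<close> \<open>0 < \<delta>\<^sub>D\<close> by (intro mult_mono) auto
    also have "\<dots> \<le> prob {\<omega> \<in> space M. W \<omega> - c n * Z n \<omega> \<ge> D n \<omega> / s}"
      by (rule bound)
    finally show ?case .
  qed
  moreover have "0 < \<delta>\<^sub>W * (1/2) * \<delta>\<^sub>D" using \<open>0 < \<delta>\<^sub>W\<close> \<open>0 < \<delta>\<^sub>D\<close> by simp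
  ultimately show ?thesis by blast
qed

theorem lemma3:
  fixes p m :: nat and \<beta> :: "real vec" and \<sigma> :: real and Mset :: "nat set" and \<alpha>0 :: real
    and X :: "nat \<Rightarrow> real mat" and Q :: "real mat"
    and \<Omega> :: "'a measure" and W :: "'a \<Rightarrow> real" and Z :: "nat \<Rightarrow> 'a \<Rightarrow> real"
    and \<epsilon> :: "nat \<Rightarrow> 'a \<Rightarrow> nat \<Rightarrow> real"
  assumes "p \<ge> 1"
    and "\<beta> \<in> carrier_vec p"
    and "\<sigma> > 0"
    and "Mset \<subseteq> {0..<p}" and "card Mset = m"
    and "0 < \<alpha>0" and "\<alpha>0 < 1"
    and X_dim: "\<And>n. X n \<in> carrier_mat n p"
    and "Q \<in> carrier_mat p p" and "pos_def_mat Q"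
    and X_lim: "\<And>i j. i < p \<Longrightarrow> j < p \<Longrightarrow>
       (\<lambda>n. (1 / real n) * ((X n)\<^sup>T * X n) $$ (i, j)) \<longlonglongrightarrow> Q $$ (i, j)"
    and "prob_space \<Omega>"
    and eps_indep: "\<And>n. prob_space.indep_vars \<Omega> (\<lambda>_. borel) (\<lambda>i \<omega>. \<epsilon> n \<omega> i) {..<n}"
    and eps_distr: "\<And>n i. i < n \<Longrightarrow> distributed \<Omega> lborel (\<lambda>\<omega>. \<epsilon> n \<omega> i) (normal_density 0 \<sigma>)"
    and W_distr: "distr \<Omega> borel W = chi_sq_measure m"
    and Z_distr: "\<And>n. n > p + 1 \<Longrightarrow> distr \<Omega> borel (Z n) = chi_sq_measure (n - p - 1)"
    and indep: "\<And>n. n > p + 1 \<Longrightarrow> prob_space.indep_vars \<Omega> (\<lambda>_. borel)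
       (\<lambda>k \<omega>. if k = (0::nat) then W \<omega> else if k = 1 then Z n \<omega>
              else (let Y = X n *\<^sub>v \<beta> + vec n (\<epsilon> n \<omega>)
                    in - (Y \<bullet> (proj_mat (drop_cols (X n) Mset) *\<^sub>v Y))))
       {0, 1, 2}"
  shows "\<exists>\<delta> > 0. \<exists>N > 0. \<forall>n > N.
     measure \<Omega> {\<omega> \<in> space \<Omega>.
        W \<omega> - (real p / (real n - real p - 1) * F_quantile p (n - p - 1) (1 - \<alpha>0)) * Z n \<omega>
        \<ge> (let Y = X n *\<^sub>v \<beta> + vec n (\<epsilon> n \<omega>)
           in - (Y \<bullet> (proj_mat (drop_cols (X n) Mset) *\<^sub>v Y))) / \<sigma>\<^sup>2} \<ge> \<delta>"
proof -
  interpret prob_space \<Omega> by fact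
  define js where "js = filter (\<lambda>j. j \<notin> Mset) [0..<p]"
  define c where "c n = real p / (real n - real p - 1) * F_quantile p (n - p - 1) (1 - \<alpha>0)" for n
  define d where "d n \<omega> = (let Y = X n *\<^sub>v \<beta> + vec n (\<epsilon> n \<omega>)
    in - (Y \<bullet> (proj_mat (drop_cols (X n) Mset) *\<^sub>v Y)))" for n \<omega>
  have "asymptotic_design X p Q"
    using X_dim X_lim \<open>Q \<in> carrier_mat p p\<close> \<open>pos_def_mat Q\<close> by unfold_locales
  then interpret design: asymptotic_design "\<lambda>n. drop_cols (X n) Mset" "length js" "principal_submat Q js"
    unfolding js_def by (rule asymptotic_design_drop_cols)
  have X\<beta>: "X n *\<^sub>v \<beta> \<in> carrier_vec n" for n
    using X_dim[of n] \<open>\<beta> \<in> carrier_vec p\<close> by simp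
  obtain K where K: "\<forall>\<^sub>F n in sequentially. \<forall>z. 0 \<le> z \<longrightarrow> z \<le> 2 * real (n - p - 1) \<longrightarrow> c n * z \<le> K"
    using F_critical_value_bounded[OF \<open>p \<ge> 1\<close> \<open>0 < \<alpha>0\<close> \<open>\<alpha>0 < 1\<close>] unfolding c_def .
  have "\<exists>\<delta> > 0. \<forall>\<^sub>F n in sequentially.
      \<delta> \<le> prob {\<omega> \<in> space \<Omega>. W \<omega> - c n * Z n \<omega> \<ge> d n \<omega> / \<sigma>\<^sup>2}"
  proof (rule eventually_prob_sub_mult_ge[OF _ W_distr _ _ _ K])
    show "W \<in> borel_measurable \<Omega>" using indep[of "p + 2"] by (simp add: indep_vars_def)
    show "0 < \<sigma>\<^sup>2" using \<open>\<sigma> > 0\<close> by simp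
    show "\<forall>\<^sub>F n in sequentially. indep_vars (\<lambda>_. borel)
        (\<lambda>i \<omega>. if i = (0::nat) then W \<omega> else if i = 1 then Z n \<omega> else d n \<omega>) {0, 1, 2}"
      using eventually_gt_at_top[of "p + 1"]
    proof eventually_elim
      case (elim n)
      show ?case unfolding d_def by (rule indep[OF elim])
    qed
    show "\<forall>\<^sub>F n in sequentially. 1 \<le> n - p - 1 \<and> distr \<Omega> borel (Z n) = chi_sq_measure (n - p - 1)"
      using eventually_gt_at_top[of "p + 1"] by eventually_elim (simp add: Z_distr)
    show "\<forall>\<^sub>F n in sequentially. \<forall>\<omega> \<in> space \<Omega>. d n \<omega> \<le> 0"
      using design.eventually_proj_mat_quadratic_nonneg by eventually_elim (simp add: d_def Let_def X\<beta>)
    show "\<exists>\<delta> > 0. \<forall>\<^sub>F n in sequentially. \<delta> \<le> prob {\<omega> \<in> space \<Omega>. d n \<omega> \<le> - t}"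
      if "m = 0" for t
    proof -
      have "Mset = {}" using that \<open>card Mset = m\<close> \<open>Mset \<subseteq> {0..<p}\<close> finite_subset by fastforce
      then have "0 < length js" using \<open>p \<ge> 1\<close> by (simp add: js_def)
      then show ?thesis
        unfolding d_def Let_def neg_le_iff_le using X\<beta>
        by (intro design.proj_mat_quadratic_large_with_positive_prob[OF \<open>prob_space \<Omega>\<close> \<open>\<sigma> > 0\<close>]
            eps_indep eps_distr)
    qed
  qed
  then show ?thesis
    unfolding c_def d_def by (blast dest: eventually_sequentially_ex_gt)
qed

end
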